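(* Let $s,k$ be positive integers with $s>2\cdot10^6$, and let $n=\lceil 3e(s+1)k\rceil$. Let $\mathcal F_1,\ldots,\mathcal F_{s+1}\subset\binom{[n]}{k}$ be shifted, cross-dependent families with $|\mathcal F_i|\ge\binom{n}{k}-\binom{n-s}{k}$ for all $i\in[s+1]$. Then there is a set $U\subset[s+1]$ with $|U|\ge 2(s+1)/3$ such that for each $i\in U$, $$|\mathcal F_i(\emptyset)|\le(3s+2)\,|\mathcal F_i(s+1)|.$$
   Context: $[n]=\{1,\ldots,n\}$; $\binom{X}{k}$ is the family of all $k$-subsets of $X$. Families $\mathcal F_1,\ldots,\mathcal F_{s+1}$ are cross-dependent if there are no pairwise disjoint $F_1,\ldots,F_{s+1}$ with $F_i\in\mathcal F_i$ for all $i$. A family $\mathcal F\subset\binom{[n]}{k}$ is shifted if whenever $A\in\mathcal F$ and $B$ is obtained from $A$ by replacing some elements with smaller elements, then $B\in\mathcal F$. For a family $\mathcal G$: $\mathcal G(\emptyset):=\{A\in\mathcal G: A\cap[s+1]=\emptyset\}$ and $\mathcal G(s+1):=\{A\setminus\{s+1\}: A\in\mathcal G,\ A\cap[s+1]=\{s+1\}\}$. *)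

theory Defs
  imports Complex_Main
begin

definition ksets :: "'a set \<Rightarrow> nat \<Rightarrow> 'a set set" where
  "ksets X k = {A. A \<subseteq> X \<and> card A = k}"

definition shifted :: "nat \<Rightarrow> nat \<Rightarrow> nat set set \<Rightarrow> bool" where
  "shifted n k F \<longleftrightarrow>
     F \<subseteq> ksets {1..n} k \<and>
     (\<forall>A \<in> F. \<forall>B. B \<subseteq> {1..n} \<longrightarrow> (\<exists>f. bij_betw f A B \<and> (\<forall>x\<in>A. f x \<le> x)) \<longrightarrow> B \<in> F)"

definition cross_dependent :: "nat \<Rightarrow> (nat \<Rightarrow> 'a set set) \<Rightarrow> bool" where
  "cross_dependent s F \<longleftrightarrow>
     \<not> (\<exists>G. (\<forall>i\<in>{1..s+1}. G i \<in> F i) \<and>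
            (\<forall>i\<in>{1..s+1}. \<forall>j\<in>{1..s+1}. i \<noteq> j \<longrightarrow> G i \<inter> G j = {}))"

definition fam_empty :: "nat \<Rightarrow> nat set set \<Rightarrow> nat set set" where
  "fam_empty s G = {A \<in> G. A \<inter> {1..s+1} = {}}"

definition fam_last :: "nat \<Rightarrow> nat set set \<Rightarrow> nat set set" where
  "fam_last s G = {A - {s+1} | A. A \<in> G \<and> A \<inter> {1..s+1} = {s+1}}"

end

(*
  Put t = s + 1, let U be the set of indices i with |F_i(\<emptyset>)| \<le> (3s + 2)|F_i(s + 1)|, and
  suppose 3|U| < 2t.  A k-set of [n] can be shifted onto the progression d, d + t, ..., d + (k - 1)t
  iff it has fewer than j elements below d + (j - 1)t for every j.  A counting estimate shows that
  the sets violating this for d = |U| are fewer than binom(n, k) - binom(n - s, k), so every F_i,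
  being shifted, contains these progressions for all d \<le> |U|.  For i \<notin> U, the family F_i(\<emptyset>) is
  large compared with its shadow, which lies in F_i(s + 1); a shadow inequality then gives a set
  of F_i(\<emptyset>) that can be shifted onto c + t, c + 2t, ..., c + kt for every c \<le> t.  Giving the
  members of U the residues 1, ..., |U| modulo t and the other indices the remaining residues yields
  pairwise disjoint members of the F_i, contradicting cross-dependence.
*)
theory Submission
  imports Defs
begin

lemma exists_shift_onto_image:
  fixes g :: "nat \<Rightarrow> nat"
  assumes "finite A" "card A = k" "strict_mono_on {..<k} g"
    and "\<forall>j<k. card (A \<inter> {..<g j}) \<le> j"
  shows "\<exists>f. bij_betw f A (g ` {..<k}) \<and> (\<forall>x\<in>A. f x \<le> x)"
  using assms
proof (induction k arbitrary: A)
  case 0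
  then show ?case by (auto simp: bij_betw_def)
next
  case (Suc k)
  \<comment> \<open>send the largest element of A to the largest target g k\<close>
  define a where "a = Max A"
  have "A \<noteq> {}" using Suc.prems by auto
  then have a: "a \<in> A" "\<forall>x\<in>A. x \<le> a" using Suc.prems(1) a_def by auto
  have "g k \<le> a"
  proof (rule ccontr)
    assume "\<not> g k \<le> a"
    then have "A \<inter> {..<g k} = A" using a by auto
    then show False using Suc.prems(2,4) by (metis lessI Suc_n_not_le_n)
  qed
  define A' where "A' = A - {a}"
  have "card (A' \<inter> {..<g j}) \<le> j" if "j < k" for j
  proof -
    have "card (A' \<inter> {..<g j}) \<le> card (A \<inter> {..<g j})"
      using Suc.prems(1) by (intro card_mono) (auto simp: A'_def)
    then show ?thesis using Suc.prems(4) that by (meson less_SucI order_trans)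
  qed
  moreover have "strict_mono_on {..<k} g"
    using Suc.prems(3) by (rule monotone_on_subset) auto
  ultimately obtain f where f: "bij_betw f A' (g ` {..<k})" "\<forall>x\<in>A'. f x \<le> x"
    using Suc.IH[of A'] Suc.prems(1,2) a(1) by (auto simp: A'_def)
  have "g k \<notin> g ` {..<k}"
    using strict_mono_onD[OF Suc.prems(3)] by (auto simp: less_not_refl2)
  moreover have "bij_betw (f(a := g k)) A' (g ` {..<k})"
    using f(1) by (rule bij_betw_cong[THEN iffD1, rotated]) (auto simp: A'_def)
  ultimately have "bij_betw (f(a := g k)) (A' \<union> {a}) (g ` {..<k} \<union> {g k})"
    using notIn_Un_bij_betw[of a A' "f(a := g k)"] by (simp add: A'_def)
  moreover have "A' \<union> {a} = A" "g ` {..<k} \<union> {g k} = g ` {..<Suc k}"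
    using a(1) by (auto simp: A'_def lessThan_Suc)
  moreover have "\<forall>x\<in>A. (f(a := g k)) x \<le> x"
    using f(2) \<open>g k \<le> a\<close> by (auto simp: A'_def)
  ultimately show ?case by auto
qed

lemma shifted_contains_dominated:
  assumes "shifted n k F" "A \<in> F" "strict_mono_on {..<k} g" "g ` {..<k} \<subseteq> {1..n}"
    and "\<forall>j<k. card (A \<inter> {..<g j}) \<le> j"
  shows "g ` {..<k} \<in> F"
proof -
  have "finite A" "card A = k"
    using assms(1,2) by (auto simp: shifted_def ksets_def intro: finite_subset)
  then obtain f where "bij_betw f A (g ` {..<k})" "\<forall>x\<in>A. f x \<le> x"
    using exists_shift_onto_image assms(3,5) by blast
  then show ?thesis using assms(1,2,4) unfolding shifted_def by blast
qed

definition progression :: "nat \<Rightarrow> nat \<Rightarrow> nat \<Rightarrow> nat set" where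
  "progression a t k = (\<lambda>j. a + t * j) ` {..<k}"

lemma shifted_contains_progression:
  assumes "shifted n k F" "A \<in> F" "0 < t" "1 \<le> a" "a + t * k \<le> n + t"
    and "\<forall>j<k. card (A \<inter> {..<a + t * j}) \<le> j"
  shows "progression a t k \<in> F"
  unfolding progression_def
proof (rule shifted_contains_dominated[OF assms(1,2) _ _ assms(6)])
  show "strict_mono_on {..<k} (\<lambda>j. a + t * j)"
    using assms(3) by (intro strict_mono_onI) simp
  have "a + t * j \<le> n" if "j < k" for j
  proof -
    have "t * Suc j \<le> t * k" using that by (intro mult_le_mono2) simp
    then show ?thesis using assms(5) by simp
  qed
  then show "(\<lambda>j. a + t * j) ` {..<k} \<subseteq> {1..n}" using assms(4) by auto
qed

lemma progressions_disjoint: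
  assumes "a mod t \<noteq> b mod t"
  shows "progression a t k \<inter> progression b t l = {}"
  using assms by (auto simp: progression_def) (metis mod_mult_self2)

definition shadow :: "'a set set \<Rightarrow> 'a set set" where
  "shadow G = {A - {x} | A x. A \<in> G \<and> x \<in> A}"

lemma shadow_ksets_subset: "G \<subseteq> ksets X k \<Longrightarrow> shadow G \<subseteq> ksets X (k - 1)"
  by (force simp: shadow_def ksets_def intro: finite_subset)

lemma finite_ksets: "finite X \<Longrightarrow> finite (ksets X k)"
  unfolding ksets_def by simp

lemma card_ksets: "finite X \<Longrightarrow> card (ksets X k) = card X choose k"
  unfolding ksets_def by (rule n_subsets)

text \<open>Double counting of the pairs (A, A - {x}) with x \<in> A \<in> G.\<close>
lemma local_LYM:
  assumes X: "finite X" and G: "G \<subseteq> ksets X k" and k: "1 \<le> k"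
  shows "k * card G \<le> (card X + 1 - k) * card (shadow G)"
proof -
  have fG: "finite G" using finite_subset[OF G finite_ksets[OF X]] .
  have S: "shadow G \<subseteq> ksets X (k - 1)" using shadow_ksets_subset[OF G] .
  have fS: "finite (shadow G)" using finite_subset[OF S finite_ksets[OF X]] .
  define P where "P = Sigma G (\<lambda>A. (\<lambda>x. A - {x}) ` A)"
  define Q where "Q = Sigma (shadow G) (\<lambda>B. X - B)"
  have "card P = (\<Sum>A\<in>G. card ((\<lambda>x. A - {x}) ` A))"
    unfolding P_def using fG G X by (intro card_SigmaI) (auto simp: ksets_def dest: finite_subset)
  also have "\<dots> = (\<Sum>A\<in>G. k)"
  proof (rule sum.cong)
    fix A assume "A \<in> G"
    moreover have "inj_on (\<lambda>x. A - {x}) A" by (auto simp: inj_on_def)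
    ultimately show "card ((\<lambda>x. A - {x}) ` A) = k" using G by (auto simp: card_image ksets_def)
  qed simp
  finally have cP: "card P = k * card G" by simp
  have "P \<subseteq> (\<lambda>(B, x). (insert x B, B)) ` Q"
  proof
    fix p assume "p \<in> P"
    then obtain A x where p: "p = (A, A - {x})" "A \<in> G" "x \<in> A" unfolding P_def by auto
    then have "(A - {x}, x) \<in> Q" using G unfolding Q_def shadow_def ksets_def by auto
    moreover have "A = insert x (A - {x})" using p by auto
    ultimately show "p \<in> (\<lambda>(B, x). (insert x B, B)) ` Q" using p by force
  qed
  then have "card P \<le> card ((\<lambda>(B, x). (insert x B, B)) ` Q)"
    using fS X unfolding Q_def by (intro card_mono) auto
  also have "\<dots> \<le> card Q" using fS X by (intro card_image_le) (auto simp: Q_def)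
  also have "card Q = (\<Sum>B\<in>shadow G. card (X - B))"
    unfolding Q_def using fS X by (intro card_SigmaI) auto
  also have "\<dots> = (\<Sum>B\<in>shadow G. card X + 1 - k)"
  proof (rule sum.cong)
    fix B assume "B \<in> shadow G"
    then have "B \<subseteq> X" "card B = k - 1" using S by (auto simp: ksets_def)
    then show "card (X - B) = card X + 1 - k" using X k by (simp add: card_Diff_subset finite_subset)
  qed simp
  finally show ?thesis using cP by (simp add: mult.commute)
qed

lemma card_split_by_element:
  assumes "finite G"
  shows "card G = card {A \<in> G. M \<notin> A} + card ((\<lambda>A. A - {M}) ` {A \<in> G. M \<in> A})"
proof -
  have "inj_on (\<lambda>A. A - {M}) {A \<in> G. M \<in> A}"
    by (rule inj_onI) (metis (no_types, lifting) insert_Diff mem_Collect_eq)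
  moreover have "G = {A \<in> G. M \<notin> A} \<union> {A \<in> G. M \<in> A}" by auto
  ultimately show ?thesis using assms
    by (metis (no_types, lifting) card_Un_disjoint card_image disjoint_iff finite_Un mem_Collect_eq)
qed

lemma card_shadow_split:
  assumes "finite (shadow G)"
  shows "card (shadow {A \<in> G. M \<notin> A}) + card (shadow ((\<lambda>A. A - {M}) ` {A \<in> G. M \<in> A}))
           \<le> card (shadow G)"
proof -
  define S0 where "S0 = shadow {A \<in> G. M \<notin> A}"
  define S1 where "S1 = shadow ((\<lambda>A. A - {M}) ` {A \<in> G. M \<in> A})"
  have avoid: "M \<notin> B" if "B \<in> S1" for B using that by (auto simp: S1_def shadow_def)
  then have inj: "inj_on (insert M) S1" by (meson inj_onI insert_ident)
  have sub: "S0 \<union> insert M ` S1 \<subseteq> shadow G"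
  proof
    fix B assume "B \<in> S0 \<union> insert M ` S1"
    then consider "B \<in> S0" | A x where "A \<in> G" "M \<in> A" "x \<in> A - {M}" "B = insert M (A - {M} - {x})"
      unfolding S0_def S1_def shadow_def by blast
    then show "B \<in> shadow G"
    proof cases
      case 1 then show ?thesis by (auto simp: S0_def shadow_def)
    next
      case (2 A x)
      then have "B = A - {x}" by auto
      with 2 show ?thesis by (auto simp: shadow_def)
    qed
  qed
  have "S0 \<inter> insert M ` S1 = {}" by (auto simp: S0_def shadow_def)
  moreover have "finite S1"
    using inj finite_subset[OF sub assms] by (auto dest: finite_imageD)
  moreover have "finite S0" using finite_subset[OF sub assms] by simp
  ultimately have "card S0 + card S1 = card (S0 \<union> insert M ` S1)"
    using inj by (simp add: card_Un_disjoint card_image)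
  also have "\<dots> \<le> card (shadow G)" using sub assms by (rule card_mono[rotated])
  finally show ?thesis unfolding S0_def S1_def .
qed

lemma window_witness_remove_top:
  assumes A: "A \<in> ksets X k" "M \<in> A" and M: "ofs + c * k \<le> M"
    and j: "j \<in> {1..k}" "j \<le> card (A \<inter> {ofs<..<ofs + c * j})"
  shows "j \<in> {1..k - 1} \<and> j \<le> card ((A - {M}) \<inter> {ofs<..<ofs + c * j})"
proof -
  have "c * j \<le> c * k" using j(1) by simp
  then have "ofs + c * j \<le> M" using M by linarith
  then have "(A - {M}) \<inter> {ofs<..<ofs + c * j} = A \<inter> {ofs<..<ofs + c * j}" by auto
  moreover have "finite A" "card A = k" using A(1) j(1) by (auto simp: ksets_def intro: card_ge_0_finite)
  then have "card ((A - {M}) \<inter> {ofs<..<ofs + c * j}) \<le> k - 1"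
    using A(2) card_mono[of "A - {M}" "(A - {M}) \<inter> {ofs<..<ofs + c * j}"] by auto
  ultimately show ?thesis using j by auto
qed

text \<open>Induction on the top m of the ground interval: a short interval is handled by the local
  LYM inequality, a long one by splitting G according to whether its sets contain m.\<close>
lemma card_le_mult_card_shadow:
  assumes "1 \<le> c" "G \<subseteq> ksets {ofs<..m} k"
    and "\<forall>A\<in>G. \<exists>j\<in>{1..k}. j \<le> card (A \<inter> {ofs<..<ofs + c * j})"
  shows "card G \<le> (c - 1) * card (shadow G)"
  using assms(2,3)
proof (induction m arbitrary: G k)
  case 0
  then have "G = {}" using assms(1) by (fastforce simp: ksets_def)
  then show ?case by simp
next
  case (Suc m)
  show ?case
  proof (cases "k = 0")
    case True
    then have "G = {}" using Suc.prems(2) by auto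
    then show ?thesis by simp
  next
    case k: False
    show ?thesis
    proof (cases "Suc m < ofs + c * k")
      case True
      have "k * card G \<le> (card {ofs<..Suc m} + 1 - k) * card (shadow G)"
        using local_LYM[OF _ Suc.prems(1)] k by simp
      also have "\<dots> \<le> ((c - 1) * k) * card (shadow G)"
        using True k by (intro mult_right_mono) (auto simp: diff_mult_distrib)
      finally show ?thesis using k by (simp add: ac_simps)
    next
      case False
      define G0 where "G0 = {A \<in> G. Suc m \<notin> A}"
      define G1 where "G1 = (\<lambda>A. A - {Suc m}) ` {A \<in> G. Suc m \<in> A}"
      have sub0: "G0 \<subseteq> ksets {ofs<..m} k"
        using Suc.prems(1) by (auto simp: G0_def ksets_def subset_iff le_Suc_eq)
      have sub1: "G1 \<subseteq> ksets {ofs<..m} (k - 1)"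
        using Suc.prems(1) by (auto simp: G1_def ksets_def subset_iff le_Suc_eq intro: finite_subset)
      have IH1: "card G1 \<le> (c - 1) * card (shadow G1)"
      proof (rule Suc.IH[OF sub1], unfold G1_def, safe)
        fix A assume "A \<in> G" "Suc m \<in> A"
        then obtain j where j: "j \<in> {1..k}" "j \<le> card (A \<inter> {ofs<..<ofs + c * j})"
          using Suc.prems(2) by blast
        have "A \<in> ksets {ofs<..Suc m} k" using Suc.prems(1) \<open>A \<in> G\<close> by blast
        from window_witness_remove_top[OF this \<open>Suc m \<in> A\<close> _ j] False
        show "\<exists>j\<in>{1..k - 1}. j \<le> card ((A - {Suc m}) \<inter> {ofs<..<ofs + c * j})"
          by (auto simp: not_less)
      qed
      have IH0: "card G0 \<le> (c - 1) * card (shadow G0)"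
        using Suc.IH[OF sub0] Suc.prems(2) by (auto simp: G0_def)
      have "finite (shadow G)"
        using finite_subset[OF shadow_ksets_subset[OF Suc.prems(1)]] finite_ksets by blast
      then have split: "card (shadow G0) + card (shadow G1) \<le> card (shadow G)"
        unfolding G0_def G1_def by (rule card_shadow_split)
      have "card G = card G0 + card G1"
        unfolding G0_def G1_def using finite_subset[OF Suc.prems(1)] finite_ksets
        by (intro card_split_by_element) blast
      also have "\<dots> \<le> (c - 1) * (card (shadow G0) + card (shadow G1))"
        using IH0 IH1 by (simp add: add_mult_distrib2)
      also have "\<dots> \<le> (c - 1) * card (shadow G)"
        using split by (rule mult_le_mono2)
      finally show ?thesis .
    qed
  qed
qed

lemma card_subsets_with_many_in:
  assumes X: "finite X" and Y: "Y \<subseteq> X"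
  shows "card {A \<in> ksets X k. j \<le> card (A \<inter> Y)} \<le> (card Y choose j) * ((card X - j) choose (k - j))"
proof -
  define SS where "SS = ksets Y j"
  define TT where "TT = (\<lambda>S. ksets (X - S) (k - j))"
  have fSS: "finite SS" unfolding SS_def using finite_subset[OF Y X] by (rule finite_ksets)
  have "{A \<in> ksets X k. j \<le> card (A \<inter> Y)} \<subseteq> (\<Union>S\<in>SS. (\<lambda>T. S \<union> T) ` TT S)"
  proof
    fix A assume A: "A \<in> {A \<in> ksets X k. j \<le> card (A \<inter> Y)}"
    then obtain S where S: "S \<subseteq> A \<inter> Y" "card S = j" "finite S"
      by (auto elim: obtain_subset_with_card_n)
    have "finite A" using A X by (auto simp: ksets_def intro: finite_subset)
    then have "A - S \<in> TT S" using A S by (auto simp: TT_def ksets_def card_Diff_subset)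
    moreover have "A = S \<union> (A - S)" "S \<in> SS" using S by (auto simp: SS_def ksets_def)
    ultimately show "A \<in> (\<Union>S\<in>SS. (\<lambda>T. S \<union> T) ` TT S)" by blast
  qed
  then have "card {A \<in> ksets X k. j \<le> card (A \<inter> Y)} \<le> card (\<Union>S\<in>SS. (\<lambda>T. S \<union> T) ` TT S)"
    using fSS X by (intro card_mono) (auto simp: TT_def finite_ksets)
  also have "\<dots> \<le> (\<Sum>S\<in>SS. card ((\<lambda>T. S \<union> T) ` TT S))" by (rule card_UN_le[OF fSS])
  also have "\<dots> \<le> (\<Sum>S\<in>SS. card (TT S))" by (intro sum_mono card_image_le) (auto simp: TT_def X finite_ksets)
  also have "\<dots> = (\<Sum>S\<in>SS. (card X - j) choose (k - j))"
  proof (rule sum.cong)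
    fix S assume "S \<in> SS"
    then have "S \<subseteq> X" "card S = j" using Y by (auto simp: SS_def ksets_def)
    then show "card (TT S) = (card X - j) choose (k - j)"
      using X by (simp add: TT_def card_ksets card_Diff_subset finite_subset)
  qed simp
  also have "\<dots> = (card Y choose j) * ((card X - j) choose (k - j))"
    using finite_subset[OF Y X] by (simp add: SS_def card_ksets)
  finally show ?thesis .
qed

lemma card_ksets_many_below:
  "card {A \<in> ksets {1..n} k. j \<le> card (A \<inter> {..<x})} \<le> ((x - 1) choose j) * ((n - j) choose (k - j))"
proof -
  have "A \<inter> {..<x} = A \<inter> ({1..<x} \<inter> {1..n})" if "A \<subseteq> {1..n}" for A
    using that by auto
  then have "{A \<in> ksets {1..n} k. j \<le> card (A \<inter> {..<x})}
      = {A \<in> ksets {1..n} k. j \<le> card (A \<inter> ({1..<x} \<inter> {1..n}))}"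
    by (auto simp: ksets_def)
  also have "card \<dots> \<le> (card ({1..<x} \<inter> {1..n}) choose j) * ((n - j) choose (k - j))"
    using card_subsets_with_many_in[of "{1..n}" "{1..<x} \<inter> {1..n}" k j] by simp
  also have "\<dots> \<le> ((x - 1) choose j) * ((n - j) choose (k - j))"
    using card_mono[of "{1..<x}" "{1..<x} \<inter> {1..n}"] by (intro mult_le_mono1 binomial_right_mono) auto
  finally show ?thesis .
qed

lemma card_ksets_meeting_below:
  assumes "1 \<le> q" "q \<le> n + 1"
  shows "card {A \<in> ksets {1..n} k. 1 \<le> card (A \<inter> {..<q})} = (n choose k) - ((n + 1 - q) choose k)"
proof -
  have "{A \<in> ksets {1..n} k. 1 \<le> card (A \<inter> {..<q})} = ksets {1..n} k - ksets {q..n} k"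
    by (auto simp: ksets_def Suc_le_eq card_gt_0_iff subset_iff intro: finite_subset)
  moreover have "ksets {q..n} k \<subseteq> ksets {1..n} k" using assms by (auto simp: ksets_def)
  ultimately show ?thesis using assms by (simp add: card_Diff_subset finite_ksets card_ksets)
qed

text \<open>A k-set of [n] that is not crowded can be shifted onto progression q t k.\<close>
definition crowded_ksets :: "nat \<Rightarrow> nat \<Rightarrow> nat \<Rightarrow> nat \<Rightarrow> nat set set" where
  "crowded_ksets n k q t = {A \<in> ksets {1..n} k. \<exists>j\<in>{1..k}. j \<le> card (A \<inter> {..<q + t * (j - 1)})}"

lemma card_crowded_ksets_le:
  assumes "1 \<le> q" "q \<le> n + 1"
  shows "card (crowded_ksets n k q t) \<le> ((n choose k) - ((n + 1 - q) choose k))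
           + (\<Sum>j=2..k. ((q + t * (j - 1) - 1) choose j) * ((n - j) choose (k - j)))"
proof -
  define B where "B j = {A \<in> ksets {1..n} k. j \<le> card (A \<inter> {..<q + t * (j - 1)})}" for j
  have "crowded_ksets n k q t \<subseteq> B 1 \<union> (\<Union>j\<in>{2..k}. B j)"
  proof
    fix A assume "A \<in> crowded_ksets n k q t"
    then obtain j where "j \<in> {1..k}" "A \<in> B j" by (auto simp: crowded_ksets_def B_def)
    then show "A \<in> B 1 \<union> (\<Union>j\<in>{2..k}. B j)" by (cases "j = 1") auto
  qed
  then have "card (crowded_ksets n k q t) \<le> card (B 1 \<union> (\<Union>j\<in>{2..k}. B j))"
    by (intro card_mono) (auto simp: B_def finite_ksets)
  also have "\<dots> \<le> card (B 1) + (\<Sum>j=2..k. card (B j))"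
    using card_Un_le[of "B 1" "\<Union>j\<in>{2..k}. B j"] card_UN_le[of "{2..k}" B] by simp
  also have "\<dots> \<le> ((n choose k) - ((n + 1 - q) choose k))
           + (\<Sum>j=2..k. ((q + t * (j - 1) - 1) choose j) * ((n - j) choose (k - j)))"
    using card_ksets_meeting_below[OF assms, of k] card_ksets_many_below
    by (intro add_mono sum_mono) (auto simp: B_def)
  finally show ?thesis .
qed

lemma binomial_le_pow_div_fact: "real (L choose j) \<le> real L ^ j / fact j"
proof (cases "j \<le> L")
  case True
  have "fact L = ((L choose j) * fact j) * (fact (L - j) :: nat)"
    using binomial_fact_lemma[OF True] by (simp add: ac_simps)
  then have "(L choose j) * fact j = (fact L :: nat) div fact (L - j)" by simp
  also have "\<dots> \<le> L ^ j" by (rule fact_div_fact_le_pow[OF True])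
  finally have "real ((L choose j) * fact j) \<le> real (L ^ j)" by (simp only: of_nat_le_iff)
  then show ?thesis by (simp add: field_simps)
qed (simp add: binomial_eq_0 not_le)

lemma pow_self_le_exp_mult_fact: "1 \<le> j \<Longrightarrow> real j ^ j \<le> exp (real j - 1) * fact j"
proof (induction j rule: nat_induct_at_least)
  case base then show ?case by simp
next
  case (Suc j)
  have jp: "real j > 0" using Suc by simp
  have "(1 + 1 / real j) ^ j \<le> exp (1 / real j) ^ j"
    by (rule power_mono) (use jp in auto)
  also have "\<dots> = exp 1" using jp by (simp add: exp_of_nat_mult[symmetric])
  finally have e: "(1 + 1 / real j) ^ j \<le> exp 1" .
  have "real (Suc j) ^ Suc j = real (Suc j) * real j ^ j * (1 + 1 / real j) ^ j"
    using jp by (simp add: power_mult_distrib[symmetric] field_simps)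
  also have "\<dots> \<le> real (Suc j) * (exp (real j - 1) * fact j) * exp 1"
    by (intro mult_mono e Suc.IH) auto
  also have "\<dots> = exp (real (Suc j) - 1) * fact (Suc j)"
    by (simp add: exp_add[symmetric] algebra_simps)
  finally show ?case .
qed

lemma binomial_ratio_le:
  assumes "k \<le> n"
  shows "1 \<le> j \<Longrightarrow> j \<le> k \<Longrightarrow>
    real ((n - j) choose (k - j)) \<le> real ((n - 1) choose (k - 1)) * (real k / real n) ^ (j - 1)"
proof (induction j rule: nat_induct_at_least)
  case base then show ?case by simp
next
  case (Suc j)
  have jk: "j < k" using Suc by simp
  have "Suc (n - Suc j) * ((n - Suc j) choose (k - Suc j))
      = (Suc (n - Suc j) choose Suc (k - Suc j)) * Suc (k - Suc j)"
    by (rule Suc_times_binomial_eq)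
  moreover have "Suc (n - Suc j) = n - j" "Suc (k - Suc j) = k - j" using jk assms by auto
  ultimately have "real (n - j) * real ((n - Suc j) choose (k - Suc j))
      = real ((n - j) choose (k - j)) * real (k - j)"
    by (metis of_nat_mult)
  moreover have npos: "real n - real j > 0" using jk assms by simp
  ultimately have "real ((n - Suc j) choose (k - Suc j))
      = real ((n - j) choose (k - j)) * ((real k - real j) / (real n - real j))"
    using jk assms by (simp add: field_simps)
  also have "\<dots> \<le> real ((n - j) choose (k - j)) * (real k / real n)"
  proof (rule mult_left_mono)
    have "real j * real k \<le> real j * real n" using assms by (simp add: mult_left_mono)
    then have "(real k - real j) * real n \<le> real k * (real n - real j)" by (simp add: algebra_simps)
    then show "(real k - real j) / (real n - real j) \<le> real k / real n"
      using npos by (simp add: divide_simps)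
  qed simp
  also have "\<dots> \<le> real ((n - 1) choose (k - 1)) * (real k / real n) ^ (j - 1) * (real k / real n)"
    using Suc jk by (intro mult_right_mono) auto
  also have "\<dots> = real ((n - 1) choose (k - 1)) * (real k / real n) ^ (Suc j - 1)"
    using Suc.hyps by (cases j) auto
  finally show ?case .
qed

lemma binomial_add_gap_le: "a \<le> b \<Longrightarrow> (a choose Suc r) + (b - a) * (a choose r) \<le> b choose Suc r"
proof (induction b)
  case (Suc b)
  show ?case
  proof (cases "a = Suc b")
    case False
    then have ab: "a \<le> b" using Suc by simp
    have "(a choose Suc r) + (Suc b - a) * (a choose r) = ((a choose Suc r) + (b - a) * (a choose r)) + (a choose r)"
      using ab by (simp add: Suc_diff_le)
    also have "\<dots> \<le> (b choose Suc r) + (b choose r)"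
      using Suc.IH[OF ab] binomial_right_mono[OF ab, of r] by linarith
    finally show ?thesis by simp
  qed simp
qed simp

lemma binomial_diff_ge:
  assumes "0 < L" "r \<le> L"
  shows "L + d \<le> b \<Longrightarrow> real (b choose r) * (1 - real r / real L) ^ d \<le> real ((b - d) choose r)"
proof (induction d)
  case (Suc d)
  define a where "a = b - d"
  have aL: "a \<ge> L + 1" using Suc.prems a_def by simp
  have "real (a - r) * real (a choose r) = real a * real ((a - 1) choose r)"
    using binomial_absorb_comp[of a r] by (metis of_nat_mult)
  then have eq: "real ((a - 1) choose r) = real (a choose r) * (1 - real r / real a)"
    using aL assms by (simp add: field_simps)
  have "real r / real a \<le> real r / real L" using aL assms by (intro divide_left_mono) auto
  have "real (b choose r) * (1 - real r / real L) ^ Suc d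
      = (real (b choose r) * (1 - real r / real L) ^ d) * (1 - real r / real L)"
    by (simp add: algebra_simps)
  also have "\<dots> \<le> real (a choose r) * (1 - real r / real L)"
    using Suc a_def assms by (intro mult_right_mono) auto
  also have "\<dots> \<le> real ((a - 1) choose r)"
    unfolding eq using \<open>real r / real a \<le> real r / real L\<close> by (intro mult_left_mono) auto
  also have "a - 1 = b - Suc d" using a_def by simp
  finally show ?case .
qed simp

lemma exp_1_gt: "exp 1 > (2.65::real)"
proof -
  have "exp 1 > (1 + 1/20) powr (20::real)" by (rule exp_1_gt_powr) simp
  also have "(1 + 1/20) powr (20::real) = (21/20::real) ^ 20"
    by (subst powr_realpow[symmetric]) auto
  finally show ?thesis by (simp add: power_divide)
qed

lemma sum_third_powers_from_4:
  "3 \<le> k \<Longrightarrow> (\<Sum>j=4..k. (1/3::real) ^ (j - 1)) = 1/18 - 3/2 * (1/3) ^ k"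
proof (induction k rule: nat_induct_at_least)
  case (Suc k)
  then show ?case by simp
qed (simp add: power_one_over)

text \<open>Bounds for (j - 1/3)^j / j! * u^(j - 1) when e u \<le> 1/3: the exact values for j = 2, 3, and
  (e u)^(j - 1) from j^j \<le> e^(j - 1) j! for larger j.\<close>
definition term_weight :: "nat \<Rightarrow> real" where
  "term_weight j = (if j = 2 then 25 / (54 * exp 1) else if j = 3 then 256 / (729 * exp 1 ^ 2)
     else (1/3) ^ (j - 1))"

lemma power_term_le_term_weight:
  assumes "2 \<le> j" "0 \<le> u" "exp 1 * u \<le> 1/3"
  shows "(real j - 1/3) ^ j / fact j * u ^ (j - 1) \<le> term_weight j"
proof -
  have u: "u \<le> 1 / (3 * exp 1)" using assms(3) by (simp add: field_simps)
  consider "j = 2" | "j = 3" | "4 \<le> j" using assms(1) by linarith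
  then show ?thesis
  proof cases
    case 1
    then show ?thesis using u by (simp add: term_weight_def power2_eq_square)
  next
    case 2
    have "(real j - 1/3) ^ j / fact j * u ^ (j - 1) = 256/81 * u\<^sup>2"
      using 2 by (simp add: power2_eq_square power3_eq_cube fact_numeral)
    also have "\<dots> \<le> 256/81 * (1 / (3 * exp 1))\<^sup>2"
      using u assms(2) by (intro mult_left_mono power_mono) auto
    finally show ?thesis using 2 by (simp add: term_weight_def power2_eq_square)
  next
    case 3
    have "(real j - 1/3) ^ j \<le> real j ^ j" using 3 by (intro power_mono) auto
    also have "\<dots> \<le> exp (real j - 1) * fact j" using pow_self_le_exp_mult_fact 3 by simp
    also have "exp (real j - 1) = exp 1 ^ (j - 1)"
      using 3 by (simp add: exp_of_nat_mult[symmetric])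
    finally have "(real j - 1/3) ^ j / fact j * u ^ (j - 1) \<le> exp 1 ^ (j - 1) * u ^ (j - 1)"
      using assms(2) by (intro mult_right_mono) (auto simp: pos_divide_le_eq)
    also have "\<dots> = (exp 1 * u) ^ (j - 1)" by (simp add: power_mult_distrib)
    also have "\<dots> \<le> (1/3) ^ (j - 1)" using assms(2,3) by (intro power_mono) auto
    finally show ?thesis using 3 by (simp add: term_weight_def)
  qed
qed

lemma sum_term_weight_lt: "(\<Sum>j=2..k. term_weight j) < (1 - 1 / (3 * exp 1)) / 3"
proof -
  define e :: real where "e = exp 1"
  have e: "e > 2.65" using exp_1_gt by (simp add: e_def)
  have "(\<Sum>j=2..k. term_weight j) \<le> 25 / (54 * e) + 256 / (729 * e\<^sup>2) + 1/18"
  proof -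
    consider "k < 3" | "3 \<le> k" by linarith
    then show ?thesis
    proof cases
      case 1
      then have "k < 2 \<or> k = 2" by linarith
      then show ?thesis using e by (auto simp: term_weight_def e_def)
    next
      case 2
      have "(\<Sum>j=2..k. term_weight j) = term_weight 2 + (term_weight 3 + (\<Sum>j=4..k. (1/3) ^ (j - 1)))"
        using 2 by (simp add: sum.atLeast_Suc_atMost numeral_eq_Suc term_weight_def)
      moreover have "(\<Sum>j=4..k. (1/3::real) ^ (j - 1)) \<le> 1/18"
        using sum_third_powers_from_4[OF 2] by simp
      ultimately show ?thesis by (simp add: term_weight_def e_def)
    qed
  qed
  also have "\<dots> < (1 - 1 / (3 * e)) / 3"
  proof -
    have "2.65 * 2.65 < e * e" using e by (intro mult_strict_mono) auto
    then have "25 / (54 * e) < 1748/10000" "256 / (729 * e\<^sup>2) < 501/10000" "1 / (3 * e) < 126/1000"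
      using e by (simp_all add: pos_divide_less_eq power2_eq_square)
    then show ?thesis by argo
  qed
  finally show ?thesis by (simp add: e_def)
qed

lemma add_mult_le_of_real_bound:
  assumes "1 \<le> k" "real n \<ge> 3 * exp 1 * real t * real k"
  shows "t + t * k \<le> n"
proof -
  have "2 * (real t * real k) \<le> (3 * exp 1) * (real t * real k)"
    using exp_1_gt by (intro mult_right_mono) auto
  then have "real (2 * t * k) \<le> real n" using assms(2) by (simp add: ac_simps)
  moreover have "t \<le> t * k" using assms(1) by simp
  ultimately show ?thesis by linarith
qed

lemma crowded_term_le:
  assumes q: "1 \<le> q" "3 * q < 2 * t" and n: "real n \<ge> 3 * exp 1 * real t * real k"
    and j: "j \<in> {2..k}"
  shows "real (((q + t * (j - 1) - 1) choose j) * ((n - j) choose (k - j)))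
           \<le> real ((n - 1) choose (k - 1)) * real t * term_weight j"
proof -
  define N where "N = real ((n - 1) choose (k - 1))"
  define u where "u = real t * real k / real n"
  have "k \<le> t * k" using q by simp
  moreover have "t + t * k \<le> n" using add_mult_le_of_real_bound[OF _ n] j by simp
  ultimately have "k \<le> n" by linarith
  have "real (q + t * (j - 1) - 1) = real q + real t * (real j - 1) - 1"
    using q j by simp
  moreover have "3 * real q \<le> 2 * real t - 1" using q by linarith
  ultimately have "real (q + t * (j - 1) - 1) \<le> real t * (real j - 1/3)"
    by (simp add: algebra_simps)
  then have "real (q + t * (j - 1) - 1) ^ j / fact j \<le> (real t * (real j - 1/3)) ^ j / fact j"
    by (intro divide_right_mono power_mono) auto
  then have "real ((q + t * (j - 1) - 1) choose j) \<le> (real t * (real j - 1/3)) ^ j / fact j"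
    using binomial_le_pow_div_fact order_trans by blast
  moreover have "real ((n - j) choose (k - j)) \<le> N * (real k / real n) ^ (j - 1)"
    unfolding N_def using binomial_ratio_le[OF \<open>k \<le> n\<close>, of j] j by simp
  ultimately have "real (((q + t * (j - 1) - 1) choose j) * ((n - j) choose (k - j)))
      \<le> (real t * (real j - 1/3)) ^ j / fact j * (N * (real k / real n) ^ (j - 1))"
    using j unfolding of_nat_mult by (intro mult_mono) auto
  also have "\<dots> = N * real t * ((real j - 1/3) ^ j / fact j * u ^ (j - 1))"
  proof -
    obtain i where "j = Suc i" using j by (cases j) auto
    then show ?thesis by (simp add: u_def power_mult_distrib power_divide)
  qed
  also have "\<dots> \<le> N * real t * term_weight j"
  proof (intro mult_left_mono power_term_le_term_weight)
    have "0 < real n" using \<open>k \<le> n\<close> j by simp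
    then show "exp 1 * u \<le> 1/3"
      using n by (simp add: u_def pos_divide_le_eq)
  qed (use j in \<open>auto simp: u_def N_def\<close>)
  finally show ?thesis unfolding N_def .
qed

lemma crowded_sum_lt:
  assumes k: "1 \<le> k" and q: "1 \<le> q" "3 * q < 2 * t"
    and n: "real n \<ge> 3 * exp 1 * real t * real k"
  shows "real (\<Sum>j=2..k. ((q + t * (j - 1) - 1) choose j) * ((n - j) choose (k - j)))
           < real ((n - 1) choose (k - 1)) * real t * ((1 - 1 / (3 * exp 1)) / 3)"
proof -
  have "k \<le> t * k" using q by simp
  then have "k \<le> n" using add_mult_le_of_real_bound[OF k n] by linarith
  then have pos: "0 < real ((n - 1) choose (k - 1)) * real t" using k q by simp
  have "real (\<Sum>j=2..k. ((q + t * (j - 1) - 1) choose j) * ((n - j) choose (k - j)))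
      \<le> (\<Sum>j=2..k. real ((n - 1) choose (k - 1)) * real t * term_weight j)"
    unfolding of_nat_sum using crowded_term_le[OF q n] by (intro sum_mono) auto
  also have "\<dots> < real ((n - 1) choose (k - 1)) * real t * ((1 - 1 / (3 * exp 1)) / 3)"
    using mult_strict_left_mono[OF sum_term_weight_lt pos] by (simp add: sum_distrib_left)
  finally show ?thesis .
qed

lemma binomial_drop_ge:
  assumes k: "1 \<le> k" and t: "2 \<le> t" and n: "real n \<ge> 3 * exp 1 * real t * real k"
  shows "real ((n - 1) choose (k - 1)) * (1 - 1 / (3 * exp 1)) \<le> real ((n + 1 - t) choose (k - 1))"
proof -
  define e :: real where "e = exp 1"
  define L where "L = n + 1 - t"
  have e: "e > 1" using exp_1_gt by (simp add: e_def)
  have "k \<le> t * k" using t by simp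
  then have ntk: "t + k \<le> n" using add_mult_le_of_real_bound[OF k n] by linarith
  then have L: "0 < L" "k - 1 \<le> L" "real L = real n + 1 - real t"
    by (auto simp: L_def)
  have "3 * e * (real (t - 2) * real (k - 1)) \<le> real L"
  proof -
    have "3 * e * (real (t - 2) * real (k - 1))
        = 3 * e * (real t * real k) - 3 * e * real t - 6 * e * real k + 6 * e"
      using t k by (simp add: algebra_simps)
    moreover have "e * real k \<ge> e" using e k by simp
    moreover have "e * real t \<ge> 1 * real t" using e by (intro mult_right_mono) auto
    ultimately show ?thesis using L(3) n by (simp add: e_def[symmetric] ac_simps)
  qed
  then have small: "real (t - 2) * (real (k - 1) / real L) \<le> 1 / (3 * e)"
    using L e by (simp add: divide_simps ac_simps)
  have "1 - 1 / (3 * e) \<le> 1 + real (t - 2) * (- (real (k - 1) / real L))" using small by simp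
  also have "\<dots> \<le> (1 - real (k - 1) / real L) ^ (t - 2)"
    using Bernoulli_inequality[of "- (real (k - 1) / real L)" "t - 2"] L by simp
  finally have "real ((n - 1) choose (k - 1)) * (1 - 1 / (3 * e))
      \<le> real ((n - 1) choose (k - 1)) * (1 - real (k - 1) / real L) ^ (t - 2)"
    by (intro mult_left_mono) auto
  also have "\<dots> \<le> real (((n - 1) - (t - 2)) choose (k - 1))"
    using binomial_diff_ge[OF L(1,2), of "t - 2" "n - 1"] ntk t by (simp add: L_def)
  also have "(n - 1) - (t - 2) = n + 1 - t" using ntk t by linarith
  finally show ?thesis by (simp add: e_def)
qed

lemma crowded_bound_lt:
  assumes k: "1 \<le> k" and q: "1 \<le> q" "3 * q < 2 * t"
    and n: "real n \<ge> 3 * exp 1 * real t * real k"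
  shows "(\<Sum>j=2..k. ((q + t * (j - 1) - 1) choose j) * ((n - j) choose (k - j)))
           + ((n + 1 - t) choose k) < (n + 1 - q) choose k"
proof -
  define N where "N = real ((n - 1) choose (k - 1))"
  define c :: real where "c = 1 - 1 / (3 * exp 1)"
  have "c > 0" using exp_1_gt by (simp add: c_def field_simps)
  have "t + t * k \<le> n" using add_mult_le_of_real_bound[OF k n] .
  have "real (\<Sum>j=2..k. ((q + t * (j - 1) - 1) choose j) * ((n - j) choose (k - j)))
      < N * real t * (c / 3)"
    using crowded_sum_lt[OF k q n] by (simp add: N_def c_def)
  also have "\<dots> = (real t / 3) * (N * c)" by simp
  also have "\<dots> \<le> real (t - q) * (N * c)"
    using q \<open>c > 0\<close> by (intro mult_right_mono) (auto simp: N_def)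
  also have "\<dots> \<le> real (t - q) * real ((n + 1 - t) choose (k - 1))"
    using binomial_drop_ge[OF k _ n] q by (intro mult_left_mono) (auto simp: N_def c_def)
  finally have "(\<Sum>j=2..k. ((q + t * (j - 1) - 1) choose j) * ((n - j) choose (k - j)))
      < (t - q) * ((n + 1 - t) choose (k - 1))"
    unfolding of_nat_mult[symmetric] of_nat_less_iff .
  moreover have "((n + 1 - t) choose k) + (t - q) * ((n + 1 - t) choose (k - 1)) \<le> (n + 1 - q) choose k"
    using binomial_add_gap_le[of "n + 1 - t" "n + 1 - q" "k - 1"] k q \<open>t + t * k \<le> n\<close>
    by (simp add: Suc_diff_le)
  ultimately show ?thesis by linarith
qed

lemma shadow_fam_empty_subset_fam_last:
  assumes sh: "shifted n k F" and sn: "s + 1 \<le> n"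
  shows "shadow (fam_empty s F) \<subseteq> fam_last s F"
proof
  fix B assume "B \<in> shadow (fam_empty s F)"
  then obtain A x where A: "A \<in> F" "A \<inter> {1..s+1} = {}" "x \<in> A" "B = A - {x}"
    unfolding shadow_def fam_empty_def by auto
  have An: "A \<subseteq> {1..n}" using sh A(1) unfolding shifted_def ksets_def by auto
  have x: "s + 1 < x" using A(2,3) An by force
  have sA: "s + 1 \<notin> A" using A(2) by auto
  define A' where "A' = insert (s + 1) (A - {x})"
  define f where "f y = (if y = x then s + 1 else y)" for y
  have "bij_betw f A A'"
    unfolding bij_betw_def inj_on_def A'_def f_def using sA A(3) by auto
  moreover have "\<forall>y\<in>A. f y \<le> y" unfolding f_def using x by auto
  moreover have "A' \<subseteq> {1..n}" unfolding A'_def using An sn by auto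
  ultimately have "A' \<in> F" using sh A(1) unfolding shifted_def by blast
  moreover have "A' \<inter> {1..s+1} = {s+1}" "A' - {s+1} = B"
    unfolding A'_def using A(2,4) sA by auto
  ultimately show "B \<in> fam_last s F" unfolding fam_last_def by blast
qed

lemma large_shifted_contains_progression:
  assumes sh: "shifted n k F" and k: "1 \<le> k" and q: "3 * q < 2 * t" "d \<in> {1..q}"
    and n: "real n \<ge> 3 * exp 1 * real t * real k"
    and large: "(n choose k) - ((n + 1 - t) choose k) \<le> card F"
  shows "progression d t k \<in> F"
proof -
  have "t + t * k \<le> n" using add_mult_le_of_real_bound[OF k n] .
  have "card (crowded_ksets n k q t) \<le> ((n choose k) - ((n + 1 - q) choose k))
           + (\<Sum>j=2..k. ((q + t * (j - 1) - 1) choose j) * ((n - j) choose (k - j)))"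
    using q \<open>t + t * k \<le> n\<close> by (intro card_crowded_ksets_le) auto
  moreover have "(\<Sum>j=2..k. ((q + t * (j - 1) - 1) choose j) * ((n - j) choose (k - j)))
           + ((n + 1 - t) choose k) < (n + 1 - q) choose k"
    using q by (intro crowded_bound_lt[OF k _ _ n]) auto
  moreover have "(n + 1 - q) choose k \<le> n choose k"
    using q(2) by (intro binomial_right_mono) auto
  ultimately have "card (crowded_ksets n k q t) < card F" using large by linarith
  moreover have "finite (crowded_ksets n k q t)"
    by (rule finite_subset[of _ "ksets {1..n} k"]) (auto simp: crowded_ksets_def finite_ksets)
  ultimately have "\<not> F \<subseteq> crowded_ksets n k q t" using card_mono by (metis not_le)
  then obtain A where A: "A \<in> F" "A \<notin> crowded_ksets n k q t" by blast
  have "A \<in> ksets {1..n} k" using sh A(1) by (auto simp: shifted_def)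
  then have "finite A" and uncrowded: "\<forall>j\<in>{1..k}. card (A \<inter> {..<q + t * (j - 1)}) < j"
    using A(2) by (auto simp: crowded_ksets_def ksets_def not_le intro: finite_subset)
  have "card (A \<inter> {..<d + t * j}) \<le> j" if "j < k" for j
  proof -
    have "card (A \<inter> {..<d + t * j}) \<le> card (A \<inter> {..<q + t * (Suc j - 1)})"
      using \<open>finite A\<close> q(2) by (intro card_mono) auto
    also have "\<dots> < Suc j" using uncrowded[rule_format, of "Suc j"] that by simp
    finally show ?thesis by simp
  qed
  then show ?thesis
    using q \<open>t + t * k \<le> n\<close> by (intro shifted_contains_progression[OF sh A(1)]) auto
qed

lemma card_below_le_of_sparse_windows:
  assumes "A \<subseteq> {t<..n}" "finite A" "c \<le> t" "\<forall>j\<in>{1..k}. card (A \<inter> {t<..<t + 3 * t * j}) < j"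
    and "j < k"
  shows "card (A \<inter> {..<c + t + t * j}) \<le> j"
proof -
  have bound: "c + t + t * j \<le> t + 3 * t * Suc j" using assms(3) by (simp add: algebra_simps)
  have "A \<inter> {..<c + t + t * j} \<subseteq> A \<inter> {t<..<t + 3 * t * Suc j}"
  proof
    fix x assume x: "x \<in> A \<inter> {..<c + t + t * j}"
    then have "t < x" using assms(1) by auto
    moreover have "x < t + 3 * t * Suc j" using x bound by (simp only: Int_iff lessThan_iff) linarith
    ultimately show "x \<in> A \<inter> {t<..<t + 3 * t * Suc j}" using x by simp
  qed
  then have "card (A \<inter> {..<c + t + t * j}) \<le> card (A \<inter> {t<..<t + 3 * t * Suc j})"
    using assms(2) by (intro card_mono) auto
  also have "\<dots> < Suc j" using assms(4)[rule_format, of "Suc j"] assms(5) by simp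
  finally show ?thesis by simp
qed

lemma sparse_shifted_contains_progression:
  assumes sh: "shifted n k F" and n: "(s + 1) + (s + 1) * k \<le> n" and c: "c \<in> {1..s+1}"
    and sparse: "(3 * s + 2) * card (fam_last s F) < card (fam_empty s F)"
  shows "progression (c + (s + 1)) (s + 1) k \<in> F"
proof -
  define t where "t = s + 1"
  define G where "G = fam_empty s F"
  have G: "G \<subseteq> ksets {t<..n} k"
    using sh by (force simp: G_def t_def fam_empty_def shifted_def ksets_def)
  have "card (shadow G) \<le> card (fam_last s F)"
  proof (rule card_mono)
    have "finite F" using sh by (auto simp: shifted_def intro: finite_subset[OF _ finite_ksets])
    then show "finite (fam_last s F)" by (simp add: fam_last_def)
    show "shadow G \<subseteq> fam_last s F"
      unfolding G_def using n by (intro shadow_fam_empty_subset_fam_last[OF sh]) auto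
  qed
  then have "(3 * s + 2) * card (shadow G) \<le> (3 * s + 2) * card (fam_last s F)"
    by (rule mult_le_mono2)
  then have "\<not> card G \<le> (3 * t - 1) * card (shadow G)"
    using sparse by (simp add: t_def G_def)
  then have "\<not> (\<forall>A\<in>G. \<exists>j\<in>{1..k}. j \<le> card (A \<inter> {t<..<t + 3 * t * j}))"
    using card_le_mult_card_shadow[of "3 * t" G t n k, OF _ G] by (auto simp: t_def)
  then obtain A where A: "A \<in> G" "\<forall>j\<in>{1..k}. card (A \<inter> {t<..<t + 3 * t * j}) < j"
    by (meson not_le)
  have "A \<in> F" using A(1) by (simp add: G_def fam_empty_def)
  have "A \<subseteq> {t<..n}" "finite A" using A(1) G by (auto simp: ksets_def intro: finite_subset)
  have "card (A \<inter> {..<c + t + t * j}) \<le> j" if "j < k" for j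
    using \<open>A \<subseteq> {t<..n}\<close> \<open>finite A\<close> c A(2) that
    by (intro card_below_le_of_sparse_windows) (auto simp: t_def)
  then show ?thesis
    unfolding t_def[symmetric] using c n
    by (intro shifted_contains_progression[OF sh \<open>A \<in> F\<close>]) (auto simp: t_def)
qed

lemma exists_bij_betw_mapping_subset:
  assumes "finite A" "finite B" "card A = card B" "C \<subseteq> A" "D \<subseteq> B" "card C = card D"
  shows "\<exists>\<sigma>. bij_betw \<sigma> A B \<and> \<sigma> ` C = D"
proof -
  have fin: "finite C" "finite D" using assms finite_subset by auto
  obtain h1 where h1: "bij_betw h1 C D" using finite_same_card_bij[OF fin assms(6)] by blast
  have "card (A - C) = card (B - D)" using assms fin by (simp add: card_Diff_subset)
  then obtain h2 where h2: "bij_betw h2 (A - C) (B - D)"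
    using finite_same_card_bij[OF finite_Diff[OF assms(1)] finite_Diff[OF assms(2)]] by blast
  have "bij_betw (\<lambda>x. if x \<in> C then h1 x else h2 x) (C \<union> (A - C)) (D \<union> (B - D))"
    by (rule bij_betw_disjoint_Un[OF h1 h2]) auto
  moreover have "C \<union> (A - C) = A" "D \<union> (B - D) = B" using assms(4,5) by auto
  moreover have "(\<lambda>x. if x \<in> C then h1 x else h2 x) ` C = D" using h1 by (simp add: bij_betw_def)
  ultimately show ?thesis by metis
qed

lemma not_cross_dependent_of_progressions:
  assumes U: "U \<subseteq> {1..s+1}"
    and in_U: "\<forall>i\<in>U. \<forall>d\<in>{1..card U}. progression d (s + 1) k \<in> F i"
    and not_in_U: "\<forall>i\<in>{1..s+1} - U. \<forall>c\<in>{1..s+1}. progression (c + (s + 1)) (s + 1) k \<in> F i"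
  shows "\<not> cross_dependent s F"
proof -
  define t where "t = s + 1"
  have "card U \<le> t" using card_mono[OF _ U] by (simp add: t_def)
  have "\<exists>\<sigma>. bij_betw \<sigma> {1..t} {1..t} \<and> \<sigma> ` U = {1..card U}"
    by (rule exists_bij_betw_mapping_subset) (use U \<open>card U \<le> t\<close> in \<open>auto simp: t_def\<close>)
  then obtain \<sigma> where \<sigma>: "bij_betw \<sigma> {1..t} {1..t}" "\<sigma> ` U = {1..card U}" by blast
  define G where "G i = (if i \<in> U then progression (\<sigma> i) t k else progression (\<sigma> i + t) t k)" for i
  have "G i \<in> F i" if i: "i \<in> {1..t}" for i
  proof (cases "i \<in> U")
    case True
    then have "\<sigma> i \<in> {1..card U}" using \<sigma>(2) by blast
    then show ?thesis using in_U True by (simp add: G_def t_def)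
  next
    case False
    have "\<sigma> i \<in> {1..t}" using \<sigma>(1) i by (rule bij_betw_apply)
    then show ?thesis using not_in_U False i by (simp add: G_def t_def)
  qed
  moreover have "G i \<inter> G j = {}" if "i \<in> {1..t}" "j \<in> {1..t}" "i \<noteq> j" for i j
  proof -
    have \<sigma>ij: "\<sigma> i \<noteq> \<sigma> j" "\<sigma> i \<in> {1..t}" "\<sigma> j \<in> {1..t}"
      using \<sigma>(1) that by (metis bij_betw_imp_inj_on inj_onD, (metis bij_betw_apply)+)
    have res: "x mod t = (if x = t then 0 else x)" if "x \<in> {1..t}" for x
      using that by auto
    have "\<sigma> i mod t \<noteq> \<sigma> j mod t"
      using res[OF \<sigma>ij(2)] res[OF \<sigma>ij(3)] \<sigma>ij by (auto split: if_splits)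
    then show ?thesis
      unfolding G_def by (cases "i \<in> U"; cases "j \<in> U") (simp_all add: progressions_disjoint)
  qed
  ultimately show ?thesis unfolding cross_dependent_def t_def by blast
qed

theorem lemma2:
  fixes s k n :: nat and F :: "nat \<Rightarrow> nat set set"
  assumes "k > 0" and "s > 2 * 10^6"
    and "n = nat \<lceil>3 * exp 1 * real (s + 1) * real k\<rceil>"
    and "\<forall>i\<in>{1..s+1}. shifted n k (F i)"
    and "cross_dependent s F"
    and "\<forall>i\<in>{1..s+1}. card (F i) \<ge> (n choose k) - ((n - s) choose k)"
  shows "\<exists>U \<subseteq> {1..s+1}. 3 * card U \<ge> 2 * (s + 1) \<and>
           (\<forall>i\<in>U. card (fam_empty s (F i)) \<le> (3 * s + 2) * card (fam_last s (F i)))"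
proof -
  define U where "U = {i \<in> {1..s+1}. card (fam_empty s (F i)) \<le> (3 * s + 2) * card (fam_last s (F i))}"
  have U: "U \<subseteq> {1..s+1}" by (auto simp: U_def)
  have n: "real n \<ge> 3 * exp 1 * real (s + 1) * real k" using assms(3) by linarith
  have "(s + 1) + (s + 1) * k \<le> n" using add_mult_le_of_real_bound[OF _ n] assms(1) by simp
  have "2 * (s + 1) \<le> 3 * card U"
  proof (rule ccontr)
    assume "\<not> 2 * (s + 1) \<le> 3 * card U"
    then have "\<forall>i\<in>U. \<forall>d\<in>{1..card U}. progression d (s + 1) k \<in> F i"
      using U assms(1,4,6) n by (intro ballI large_shifted_contains_progression) auto
    moreover have "\<forall>i\<in>{1..s+1} - U. \<forall>c\<in>{1..s+1}. progression (c + (s + 1)) (s + 1) k \<in> F i"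
    proof (intro ballI)
      fix i c assume i: "i \<in> {1..s+1} - U" and c: "c \<in> {1..s+1}"
      then have "(3 * s + 2) * card (fam_last s (F i)) < card (fam_empty s (F i))"
        by (auto simp: U_def not_le)
      then show "progression (c + (s + 1)) (s + 1) k \<in> F i"
        using assms(4) i c \<open>(s + 1) + (s + 1) * k \<le> n\<close>
        by (intro sparse_shifted_contains_progression) auto
    qed
    ultimately show False using not_cross_dependent_of_progressions[OF U] assms(5) by blast
  qed
  then show ?thesis using U unfolding U_def by blast
qed

end
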